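(* Let $\mathbf{X}\in\mathbb{R}^{n\times p}$, $\mathbf{Y}\in\mathbb{R}^n$, let $\{1,\dots,p\}$ be partitioned into disjoint groups $\mathcal{G}_1,\dots,\mathcal{G}_K$, and fix $\widetilde\lambda_{\mathrm{init}}>0$. Define $$\mathbf{M}=\Big(\tfrac{\mathbf{X}^\top\mathbf{X}}{n}+\widetilde\lambda_{\mathrm{init}}\mathbf{I}\Big)^{-1}\tfrac{\mathbf{X}^\top\mathbf{X}}{n},\qquad \mathbf{N}=\tfrac{1}{\sqrt n}\Big(\tfrac{\mathbf{X}^\top\mathbf{X}}{n}+\widetilde\lambda_{\mathrm{init}}\mathbf{I}\Big)^{-1}\mathbf{X}^\top,\qquad \widetilde{\mathbf{w}}=\Big(\tfrac{\mathbf{X}^\top\mathbf{X}}{n}+\widetilde\lambda_{\mathrm{init}}\mathbf{I}\Big)^{-1}\tfrac{\mathbf{X}^\top\mathbf{Y}}{n},$$ the $K\times K$ matrix $\mathbf{A}$ with entries $A_{gh}=\|\mathbf{M}_{\mathcal{G}_g,\mathcal{G}_h}\|_F^2/n$, and vectors $\widehat{\mathbf u},\mathbf v\in\mathbb{R}^K$ with $\widehat u_g=\|\widetilde{\mathbf w}_{\mathcal{G}_g}\|_2^2$ and $v_g=\|\mathbf N_{\mathcal G_g,\cdot}\|_F^2/n$. For $\mathbb{s}>0$ let $$\widehat{\mathbf d}(\mathbb{s})=\operatorname{argmin}_{\mathbf d\in[0,\infty)^K}\Big\|\mathbf A\mathbf d-\frac{\widehat{\mathbf u}}{\mathbb{s}^2}+\mathbf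 v\Big\|_2^2,\qquad \widehat\lambda_g(\mathbb{s})=1/\widehat d_g(\mathbb{s})\in(0,\infty]$$ (with $1/0=\infty$). Assume $\mathbf A$ is invertible and $\widehat u_g>0$ for all $g$. Then: 1. If $\mathbb{s}^2\ge\max_g\{\widehat u_g/v_g\}$, then $\widehat\lambda_g(\mathbb{s})=\infty$ for all $g$, i.e. the group ridge estimator $\widehat{\mathbf w}(\widehat{\boldsymbol\lambda}(\mathbb{s}))=0$. 2. As $\mathbb{s}\to0$, $\min_g\widehat\lambda_g(\mathbb{s})\to0$. 3. If $\mathbb{s}_1,\mathbb{s}_2>0$ satisfy $\mathcal S(\mathbb{s}_1)=\mathcal S(\mathbb{s}_2)=:\mathcal S$, where $\mathcal S(\mathbb{s})=\{g:\widehat\lambda_g(\mathbb{s})<\infty\}$, then for every $g\in\mathcal S$, $$\widehat\lambda_g(\mathbb{s}_1)=\Big\{\frac{\mathbb{s}_2^2}{\mathbb{s}_1^2}\widehat\lambda_g(\mathbb{s}_2)^{-1}+\Big(\frac{\mathbb{s}_2^2}{\mathbb{s}_1^2}-1\Big)\tilde v_{\mathcal S,g}\Big\}^{-1},\qquad \tilde v_{\mathcal S,g}=\Big((\mathbf A_{\cdot,\mathcal S}^\top\mathbf A_{\cdot,\mathcal S})^{-1}\mathbf A_{\cdot,\mathcal S}^\top\mathbf v\Big)_g .$$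
   Context: For a matrix $\mathbf B$, $\mathbf B_{\mathcal G_g,\mathcal G_h}$ denotes the submatrix with rows indexed by $\mathcal G_g$ and columns by $\mathcal G_h$, $\mathbf B_{\mathcal G_g,\cdot}$ the rows indexed by $\mathcal G_g$, and $\mathbf A_{\cdot,\mathcal S}$ the columns of $\mathbf A$ indexed by $\mathcal S$; $\mathbf w_{\mathcal G_g}=(w_j)_{j\in\mathcal G_g}$. The vector $(\mathbf A_{\cdot,\mathcal S}^\top\mathbf A_{\cdot,\mathcal S})^{-1}\mathbf A_{\cdot,\mathcal S}^\top\mathbf v$ is indexed by $\mathcal S$. For $\boldsymbol\lambda\in(0,\infty]^K$, the group ridge estimator is $\widehat{\mathbf w}(\boldsymbol\lambda)\in\operatorname{argmin}_{\mathbf w}\{\frac{1}{2n}\sum_i(Y_i-x_i^\top\mathbf w)^2+\sum_g\frac{\lambda_g}{2}\|\mathbf w_{\mathcal G_g}\|_2^2\}$, with $x_i^\top$ the rows of $\mathbf X$, where $\lambda_g=\infty$ forces $\mathbf w_{\mathcal G_g}=0$. *)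

theory Defs
  imports "HOL-Analysis.Analysis" "HOL-Library.Extended_Real"
begin

text \<open>Data: X :: real^'p^'n (n rows, p columns), Y :: real^'n, n = CARD('n).
  Groups: G :: 'k \<Rightarrow> 'p set, a partition of the column index type 'p.\<close>

definition gram_reg :: "real^'p^'n \<Rightarrow> real \<Rightarrow> real^'p^'p" where
  "gram_reg X li = (1 / real CARD('n)) *\<^sub>R (transpose X ** X) + li *\<^sub>R mat 1"

definition Mmat :: "real^'p^'n \<Rightarrow> real \<Rightarrow> real^'p^'p" where
  "Mmat X li = matrix_inv (gram_reg X li) ** ((1 / real CARD('n)) *\<^sub>R (transpose X ** X))"

definition Nmat :: "real^'p^'n \<Rightarrow> real \<Rightarrow> real^'n^'p" where
  "Nmat X li = (1 / sqrt (real CARD('n))) *\<^sub>R (matrix_inv (gram_reg X li) ** transpose X)"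

definition wtilde :: "real^'p^'n \<Rightarrow> real^'n \<Rightarrow> real \<Rightarrow> real^'p" where
  "wtilde X Y li = matrix_inv (gram_reg X li) *v ((1 / real CARD('n)) *\<^sub>R (transpose X *v Y))"

definition Amat :: "real^'p^'n \<Rightarrow> real \<Rightarrow> ('k \<Rightarrow> 'p set) \<Rightarrow> real^'k^'k" where
  "Amat X li G = (\<chi> g h. (\<Sum>i\<in>G g. \<Sum>j\<in>G h. (Mmat X li $ i $ j)\<^sup>2) / real CARD('n))"

definition uhat :: "real^'p^'n \<Rightarrow> real^'n \<Rightarrow> real \<Rightarrow> ('k \<Rightarrow> 'p set) \<Rightarrow> real^'k" where
  "uhat X Y li G = (\<chi> g. \<Sum>j\<in>G g. (wtilde X Y li $ j)\<^sup>2)"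

definition vvec :: "real^'p^'n \<Rightarrow> real \<Rightarrow> ('k \<Rightarrow> 'p set) \<Rightarrow> real^'k" where
  "vvec X li G = (\<chi> g. (\<Sum>i\<in>G g. \<Sum>j\<in>UNIV. (Nmat X li $ i $ j)\<^sup>2) / real CARD('n))"

definition dobj :: "real^'k^'k \<Rightarrow> real^'k \<Rightarrow> real^'k \<Rightarrow> real \<Rightarrow> real^'k \<Rightarrow> real" where
  "dobj A u v s d = (norm (A *v d - (1 / s\<^sup>2) *\<^sub>R u + v))\<^sup>2"

definition is_dhat :: "real^'k^'k \<Rightarrow> real^'k \<Rightarrow> real^'k \<Rightarrow> real \<Rightarrow> real^'k \<Rightarrow> bool" where
  "is_dhat A u v s d \<longleftrightarrow> (\<forall>g. 0 \<le> d $ g) \<and>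
     (\<forall>d'. (\<forall>g. 0 \<le> d' $ g) \<longrightarrow> dobj A u v s d \<le> dobj A u v s d')"

definition lam_of :: "real \<Rightarrow> ereal" where
  "lam_of d = (if d = 0 then \<infinity> else ereal (1 / d))"

text \<open>\<open>((A_{.,S}^T A_{.,S})^{-1} A_{.,S}^T v)\<close>, indexed by S (extended by 0 outside S):
  the unique solution supported on S of the normal equations
  \<open>A_{.,S}^T (A_{.,S} z_S - v) = 0\<close>.\<close>
definition ls_coef :: "real^'k^'k \<Rightarrow> 'k set \<Rightarrow> real^'k \<Rightarrow> real^'k" where
  "ls_coef A S v = (THE z. (\<forall>g. g \<notin> S \<longrightarrow> z $ g = 0) \<and>
      (\<forall>h\<in>S. (transpose A *v (A *v z - v)) $ h = 0))"

definition ridge_feasible :: "('k \<Rightarrow> 'p set) \<Rightarrow> ('k \<Rightarrow> ereal) \<Rightarrow> real^'p \<Rightarrow> bool" where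
  "ridge_feasible G lam w \<longleftrightarrow> (\<forall>g. lam g = \<infinity> \<longrightarrow> (\<forall>j\<in>G g. w $ j = 0))"

definition ridge_obj :: "real^'p^'n \<Rightarrow> real^'n \<Rightarrow> ('k \<Rightarrow> 'p set) \<Rightarrow> ('k \<Rightarrow> ereal) \<Rightarrow> real^'p \<Rightarrow> real" where
  "ridge_obj X Y G lam w =
     (1 / (2 * real CARD('n))) * (\<Sum>i\<in>UNIV. (Y $ i - (X $ i) \<bullet> w)\<^sup>2)
     + (\<Sum>g\<in>{g. lam g \<noteq> \<infinity>}. real_of_ereal (lam g) / 2 * (\<Sum>j\<in>G g. (w $ j)\<^sup>2))"

definition is_group_ridge :: "real^'p^'n \<Rightarrow> real^'n \<Rightarrow> ('k \<Rightarrow> 'p set) \<Rightarrow> ('k \<Rightarrow> ereal) \<Rightarrow> real^'p \<Rightarrow> bool" where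
  "is_group_ridge X Y G lam w \<longleftrightarrow> ridge_feasible G lam w \<and>
     (\<forall>w'. ridge_feasible G lam w' \<longrightarrow> ridge_obj X Y G lam w \<le> ridge_obj X Y G lam w')"

end

theory Submission
  imports Defs "HOL-Real_Asymp.Real_Asymp"
begin

(*
  The vector d(s) solves a nonnegative least-squares problem whose matrix A has nonnegative
  entries, and all three claims are read off its optimality conditions.

  Vanishing: if u/s^2 <= v componentwise then, for d >= 0, the residual A d + (v - u/s^2) is a
  sum of two nonnegative vectors, so the objective exceeds its value at 0 by at least |A d|^2;
  hence d(s) = 0 as A is invertible. The threshold max_g u_g/v_g is finite because v > 0:
  v_g = 0 would kill row g of N, hence of M = N X / sqrt n, hence of A.

  Small s: perturbing d(s) along the all-ones vector gives <r, A d - u/s^2 + v> >= 0 for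
  r = A 1, and A d <= (max_g d_g) r, so max_g d_g >= (<r,u>/s^2 - <r,v>) / |r|^2, which tends
  to infinity as s -> 0.

  Common support: at every positive coordinate g the gradient vanishes,
  (A^T (A d - u/s^2 + v))_g = 0. For s1, s2 with the same support S, eliminating A^T u shows
  that (s2^2 d(s2) - s1^2 d(s1)) / (s1^2 - s2^2) is supported on S and solves the normal
  equations there, so by invertibility of A it is the least-squares coefficient; solving for
  d(s1) gives the formula.
*)

lemma inner_transpose_mult_vec:
  fixes A :: "real^'n^'m"
  shows "inner x (transpose A *v y) = inner (A *v x) y"
  by (metis dot_lmul_matrix inner_commute transpose_matrix_vector)

lemma invertible_mult_vec_eq_0_iff:
  fixes A :: "real^'n^'n"
  assumes "invertible A"
  shows "A *v x = 0 \<longleftrightarrow> x = 0"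
  using assms matrix_left_invertible_ker unfolding invertible_def by auto

lemma inner_vec_nonneg:
  fixes x y :: "real^'n"
  assumes "\<And>i. 0 \<le> x $ i" and "\<And>i. 0 \<le> y $ i"
  shows "0 \<le> inner x y"
  unfolding inner_vec_def using assms by (simp add: sum_nonneg)

lemma inner_vec_pos:
  fixes x y :: "real^'n"
  assumes "\<And>i. 0 \<le> x $ i" and "x \<noteq> 0" and "\<And>i. 0 < y $ i"
  shows "0 < inner x y"
proof -
  obtain i where "x $ i \<noteq> 0" using \<open>x \<noteq> 0\<close> by (auto simp: vec_eq_iff)
  then have "0 < x $ i * y $ i" using assms by (simp add: order_le_neq_trans)
  then show ?thesis
    unfolding inner_vec_def using assms(1,3)
    by (intro sum_pos2[of UNIV i]) (auto intro!: mult_nonneg_nonneg simp: less_imp_le)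
qed

lemma matrix_vector_mult_nonneg:
  fixes A :: "real^'n^'m"
  assumes "\<And>i j. 0 \<le> A $ i $ j" and "\<And>j. 0 \<le> x $ j"
  shows "0 \<le> (A *v x) $ i"
  using assms by (simp add: matrix_vector_mult_def sum_nonneg)

lemma nonneg_of_quadratic_nonneg_at_right:
  fixes a c \<delta> :: real
  assumes "0 < \<delta>" and "\<And>t. 0 < t \<Longrightarrow> t < \<delta> \<Longrightarrow> 0 \<le> 2 * t * c + t\<^sup>2 * a"
  shows "0 \<le> c"
proof -
  have "\<forall>\<^sub>F t in at_right 0. 0 \<le> 2 * c + t * a"
    unfolding eventually_at_right[OF \<open>0 < \<delta>\<close>]
  proof (intro exI[of _ \<delta>] conjI allI impI \<open>0 < \<delta>\<close>)
    fix t :: real assume "0 < t" "t < \<delta>"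
    have "t * (2 * c + t * a) = 2 * t * c + t\<^sup>2 * a"
      by (simp add: algebra_simps power2_eq_square)
    then have "0 \<le> t * (2 * c + t * a)"
      using assms(2)[OF \<open>0 < t\<close> \<open>t < \<delta>\<close>] by simp
    then show "0 \<le> 2 * c + t * a" using \<open>0 < t\<close> by (simp add: zero_le_mult_iff)
  qed
  moreover have "((\<lambda>t. 2 * c + t * a) \<longlongrightarrow> 2 * c) (at_right 0)"
    by (auto intro!: tendsto_eq_intros)
  ultimately have "0 \<le> 2 * c" by (intro tendsto_lowerbound) auto
  then show ?thesis by simp
qed

lemma dobj_add_scaleR:
  "dobj A u v s (d + t *\<^sub>R e) = dobj A u v s d
     + 2 * t * inner (A *v e) (A *v d - (1 / s\<^sup>2) *\<^sub>R u + v) + t\<^sup>2 * (norm (A *v e))\<^sup>2"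
proof -
  define r where "r = A *v d - (1 / s\<^sup>2) *\<^sub>R u + v"
  have "A *v (d + t *\<^sub>R e) - (1 / s\<^sup>2) *\<^sub>R u + v = r + t *\<^sub>R (A *v e)"
    by (simp add: r_def matrix_vector_right_distrib matrix_vector_mult_scaleR)
  then have "dobj A u v s (d + t *\<^sub>R e) = (norm (r + t *\<^sub>R (A *v e)))\<^sup>2"
    by (simp add: dobj_def)
  also have "\<dots> = (norm r)\<^sup>2 + 2 * t * inner (A *v e) r + t\<^sup>2 * (norm (A *v e))\<^sup>2"
    unfolding power2_norm_eq_inner
    by (simp add: inner_add inner_commute algebra_simps power2_eq_square)
  finally show ?thesis by (simp add: dobj_def r_def)
qed

lemma is_dhat_directional_nonneg:
  assumes "is_dhat A u v s d" and "0 < \<delta>"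
    and "\<And>t g. 0 < t \<Longrightarrow> t < \<delta> \<Longrightarrow> 0 \<le> d $ g + t * e $ g"
  shows "0 \<le> inner (A *v e) (A *v d - (1 / s\<^sup>2) *\<^sub>R u + v)"
proof (rule nonneg_of_quadratic_nonneg_at_right[OF \<open>0 < \<delta>\<close>])
  fix t :: real assume "0 < t" "t < \<delta>"
  then have "dobj A u v s d \<le> dobj A u v s (d + t *\<^sub>R e)"
    using assms(1,3) unfolding is_dhat_def by simp
  then show "0 \<le> 2 * t * inner (A *v e) (A *v d - (1 / s\<^sup>2) *\<^sub>R u + v)
      + t\<^sup>2 * (norm (A *v e))\<^sup>2"
    unfolding dobj_add_scaleR by simp
qed

lemma is_dhat_stationary:
  fixes A :: "real^'k^'k"
  assumes "is_dhat A u v s d" and "0 < d $ h"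
  shows "(transpose A *v (A *v d - (1 / s\<^sup>2) *\<^sub>R u + v)) $ h = 0"
proof -
  let ?r = "A *v d - (1 / s\<^sup>2) *\<^sub>R u + v"
  have d_nonneg: "0 \<le> d $ g" for g using assms(1) by (simp add: is_dhat_def)
  have "0 \<le> inner (A *v axis h 1) ?r"
    by (rule is_dhat_directional_nonneg[OF assms(1) zero_less_one])
      (simp add: axis_def d_nonneg add_nonneg_nonneg)
  moreover have "0 \<le> inner (A *v - axis h 1) ?r"
    by (rule is_dhat_directional_nonneg[OF assms])
      (auto simp: axis_def d_nonneg)
  moreover have "inner (A *v axis h 1) ?r = (transpose A *v ?r) $ h"
    by (simp only: inner_transpose_mult_vec[symmetric] inner_axis') simp
  moreover have "A *v - axis h 1 = - (A *v axis h 1)"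
    by (metis diff_0 matrix_vector_mult_diff_distrib matrix_vector_mult_0_right)
  ultimately show ?thesis by simp
qed

lemma is_dhat_eq_0:
  fixes A :: "real^'k^'k"
  assumes A_nonneg: "\<And>g h. 0 \<le> A $ g $ h" and "invertible A"
    and small: "\<And>g. u $ g / s\<^sup>2 \<le> v $ g" and "is_dhat A u v s d"
  shows "d = 0"
proof -
  have d_nonneg: "0 \<le> d $ g" for g using \<open>is_dhat A u v s d\<close> by (simp add: is_dhat_def)
  have "0 \<le> inner (A *v d) (v - (1 / s\<^sup>2) *\<^sub>R u)"
    using small by (intro inner_vec_nonneg matrix_vector_mult_nonneg A_nonneg d_nonneg) simp
  moreover have "dobj A u v s (0 + 1 *\<^sub>R d) \<le> dobj A u v s 0"
    using \<open>is_dhat A u v s d\<close> by (simp add: is_dhat_def)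
  then have "2 * inner (A *v d) (v - (1 / s\<^sup>2) *\<^sub>R u) + (norm (A *v d))\<^sup>2 \<le> 0"
    unfolding dobj_add_scaleR by simp
  ultimately have "(norm (A *v d))\<^sup>2 \<le> 0" by linarith
  then have "A *v d = 0" by simp
  then show ?thesis using invertible_mult_vec_eq_0_iff[OF \<open>invertible A\<close>] by simp
qed

lemma is_dhat_Max_bound:
  fixes A :: "real^'k^'k"
  assumes A_nonneg: "\<And>g h. 0 \<le> A $ g $ h" and "is_dhat A u v s d"
  defines "r \<equiv> A *v (\<chi> i. 1)"
  shows "\<exists>g. inner r u / s\<^sup>2 - inner r v \<le> d $ g * (norm r)\<^sup>2"
proof -
  have d_nonneg: "0 \<le> d $ g" for g using \<open>is_dhat A u v s d\<close> by (simp add: is_dhat_def)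
  have "Max (range (\<lambda>h. d $ h)) \<in> range (\<lambda>h. d $ h)" by (rule Max_in) auto
  then obtain g where "d $ g = Max (range (\<lambda>h. d $ h))" by (metis rangeE)
  then have g: "d $ h \<le> d $ g" for h by simp
  have "0 \<le> inner r (A *v d - (1 / s\<^sup>2) *\<^sub>R u + v)"
    unfolding r_def
    by (rule is_dhat_directional_nonneg[OF \<open>is_dhat A u v s d\<close> zero_less_one])
      (simp add: d_nonneg add_nonneg_nonneg)
  moreover have "0 \<le> inner r (A *v (d $ g *\<^sub>R (\<chi> i. 1) - d))"
    unfolding r_def using g
    by (intro inner_vec_nonneg matrix_vector_mult_nonneg A_nonneg) simp_all
  ultimately show ?thesis
    by (intro exI[of _ g])
      (simp add: r_def matrix_vector_mult_diff_distrib matrix_vector_mult_scaleR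
        inner_add_right inner_diff_right power2_norm_eq_inner)
qed

lemma lam_of_less_infinity_iff: "lam_of x < \<infinity> \<longleftrightarrow> x \<noteq> 0"
  by (simp add: lam_of_def)

lemma lam_of_nonzero: "x \<noteq> 0 \<Longrightarrow> lam_of x = ereal (inverse x)"
  by (simp add: lam_of_def inverse_eq_divide)

lemma lam_of_nonneg: "0 \<le> x \<Longrightarrow> 0 \<le> lam_of x"
  by (simp add: lam_of_def)

lemma tendsto_Min_lam_of_0:
  fixes d :: "'a \<Rightarrow> real^'k"
  assumes "\<forall>\<^sub>F x in F. \<forall>g. 0 \<le> d x $ g" and "filterlim L at_top F"
    and "\<forall>\<^sub>F x in F. \<exists>g. L x \<le> d x $ g"
  shows "((\<lambda>x. Min (range (\<lambda>g. lam_of (d x $ g)))) \<longlongrightarrow> 0) F"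
proof (rule tendsto_sandwich)
  show "\<forall>\<^sub>F x in F. 0 \<le> Min (range (\<lambda>g. lam_of (d x $ g)))"
    using assms(1) by eventually_elim (simp add: Min_ge_iff lam_of_nonneg)
  have "\<forall>\<^sub>F x in F. 0 < L x" using assms(2) by (simp add: filterlim_at_top_dense)
  with assms(3) show "\<forall>\<^sub>F x in F. Min (range (\<lambda>g. lam_of (d x $ g))) \<le> ereal (inverse (L x))"
  proof eventually_elim
    case (elim x)
    then obtain g where "0 < L x" "L x \<le> d x $ g" by blast
    then have "lam_of (d x $ g) \<le> ereal (inverse (L x))"
      by (simp add: lam_of_nonzero le_imp_inverse_le)
    then show ?case by (meson Min_le finite UNIV_I finite_imageI image_eqI order_trans)
  qed
  show "((\<lambda>x. ereal (inverse (L x))) \<longlongrightarrow> 0) F"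
    using tendsto_inverse_0_at_top[OF assms(2)] by (simp add: zero_ereal_def)
qed simp

lemma Min_lam_of_dhat_tendsto_0:
  fixes A :: "real^'k^'k"
  assumes A_nonneg: "\<And>g h. 0 \<le> A $ g $ h" and "invertible A" and u_pos: "\<And>g. 0 < u $ g"
    and dhat: "\<And>s. 0 < s \<Longrightarrow> is_dhat A u v s (d s)"
  shows "((\<lambda>s. Min (range (\<lambda>g. lam_of (d s $ g)))) \<longlongrightarrow> 0) (at_right 0)"
proof (rule tendsto_Min_lam_of_0)
  define r where "r = A *v (\<chi> i. 1)"
  have "r \<noteq> 0"
    using invertible_mult_vec_eq_0_iff[OF \<open>invertible A\<close>] by (simp add: r_def vec_eq_iff)
  then have "0 < (norm r)\<^sup>2" by simp
  moreover have "0 < inner r u"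
    using \<open>r \<noteq> 0\<close> u_pos
    by (intro inner_vec_pos) (simp_all add: r_def A_nonneg matrix_vector_mult_nonneg)
  ultimately show "filterlim (\<lambda>s. (inner r u / s\<^sup>2 - inner r v) / (norm r)\<^sup>2) at_top (at_right 0)"
    by real_asymp
  show "\<forall>\<^sub>F s in at_right 0. \<exists>g. (inner r u / s\<^sup>2 - inner r v) / (norm r)\<^sup>2 \<le> d s $ g"
    using eventually_at_right_less
  proof eventually_elim
    case (elim s)
    with is_dhat_Max_bound[OF A_nonneg dhat] \<open>0 < (norm r)\<^sup>2\<close> show ?case
      by (fastforce simp: r_def pos_divide_le_eq)
  qed
  show "\<forall>\<^sub>F s in at_right 0. \<forall>g. 0 \<le> d s $ g"
    using eventually_at_right_less by eventually_elim (use dhat in \<open>simp add: is_dhat_def\<close>)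
qed

lemma ls_coef_eqI:
  fixes A :: "real^'k^'k"
  assumes "invertible A" and supp: "\<And>g. g \<notin> S \<Longrightarrow> z $ g = 0"
    and normal: "\<And>h. h \<in> S \<Longrightarrow> (transpose A *v (A *v z - v)) $ h = 0"
  shows "ls_coef A S v = z"
  unfolding ls_coef_def
proof (rule the_equality)
  fix z' assume z': "(\<forall>g. g \<notin> S \<longrightarrow> z' $ g = 0) \<and> (\<forall>h\<in>S. (transpose A *v (A *v z' - v)) $ h = 0)"
  have "transpose A *v (A *v (z' - z)) = transpose A *v (A *v z' - v) - transpose A *v (A *v z - v)"
    by (simp add: matrix_vector_mult_diff_distrib del: transpose_matrix_vector)
  then have termwise: "(z' - z) $ h * (transpose A *v (A *v (z' - z))) $ h = 0" for h
    using z' supp normal by (cases "h \<in> S") (simp_all del: transpose_matrix_vector)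
  have "inner (z' - z) (transpose A *v (A *v (z' - z))) = 0"
    unfolding inner_vec_def by (rule sum.neutral) (simp only: inner_real_def termwise, simp)
  then have "A *v (z' - z) = 0" by (simp add: inner_transpose_mult_vec del: transpose_matrix_vector)
  then show "z' = z" using invertible_mult_vec_eq_0_iff[OF \<open>invertible A\<close>] by simp
qed (use supp normal in blast)

lemma ls_coef_common_support:
  fixes A :: "real^'k^'k"
  assumes "invertible A" and dhat1: "is_dhat A u v s1 d1" and dhat2: "is_dhat A u v s2 d2"
    and "s1 \<noteq> 0" "s2 \<noteq> 0" "s1\<^sup>2 \<noteq> s2\<^sup>2" and S1: "S = {g. d1 $ g \<noteq> 0}" and S2: "S = {g. d2 $ g \<noteq> 0}"
  shows "ls_coef A S v = (1 / (s1\<^sup>2 - s2\<^sup>2)) *\<^sub>R (s2\<^sup>2 *\<^sub>R d2 - s1\<^sup>2 *\<^sub>R d1)"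
proof (rule ls_coef_eqI[OF \<open>invertible A\<close>])
  fix h assume "h \<in> S"
  let ?T = "\<lambda>x. (transpose A *v x) $ h"
  have "d1 $ h \<noteq> 0" "d2 $ h \<noteq> 0" using \<open>h \<in> S\<close> S1 S2 by auto
  then have "0 < d1 $ h" "0 < d2 $ h"
    using dhat1 dhat2 by (simp_all add: is_dhat_def order_le_neq_trans)
  then have "?T (A *v d1) - ?T u / s1\<^sup>2 + ?T v = 0" "?T (A *v d2) - ?T u / s2\<^sup>2 + ?T v = 0"
    using is_dhat_stationary[OF dhat1] is_dhat_stationary[OF dhat2]
    by (simp_all add: matrix_vector_mult_diff_distrib matrix_vector_right_distrib
        matrix_vector_mult_scaleR del: transpose_matrix_vector)
  then have "s1\<^sup>2 * (?T (A *v d1) + ?T v) = ?T u" "s2\<^sup>2 * (?T (A *v d2) + ?T v) = ?T u"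
    using \<open>s1 \<noteq> 0\<close> \<open>s2 \<noteq> 0\<close> by (simp_all add: field_simps del: transpose_matrix_vector)
  with \<open>s1\<^sup>2 \<noteq> s2\<^sup>2\<close> show "?T (A *v ((1 / (s1\<^sup>2 - s2\<^sup>2)) *\<^sub>R (s2\<^sup>2 *\<^sub>R d2 - s1\<^sup>2 *\<^sub>R d1)) - v) = 0"
    by (simp add: matrix_vector_mult_diff_distrib matrix_vector_mult_scaleR
        del: transpose_matrix_vector) (simp add: field_simps del: transpose_matrix_vector)
qed (use S1 S2 in auto)

lemma dhat_common_support_eq:
  fixes A :: "real^'k^'k"
  assumes "invertible A" and dhat: "\<And>s. 0 < s \<Longrightarrow> is_dhat A u v s (d s)"
    and "0 < s1" "0 < s2" and "S = {g. d s1 $ g \<noteq> 0}" "S = {g. d s2 $ g \<noteq> 0}"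
  shows "d s1 $ g = s2\<^sup>2 / s1\<^sup>2 * d s2 $ g + (s2\<^sup>2 / s1\<^sup>2 - 1) * ls_coef A S v $ g"
proof (cases "s1 = s2")
  case False
  with \<open>0 < s1\<close> \<open>0 < s2\<close> have "s1\<^sup>2 \<noteq> s2\<^sup>2" by (simp add: power2_eq_iff)
  have "ls_coef A S v $ g = (s2\<^sup>2 * d s2 $ g - s1\<^sup>2 * d s1 $ g) / (s1\<^sup>2 - s2\<^sup>2)"
    using ls_coef_common_support[OF assms(1) dhat dhat _ _ \<open>s1\<^sup>2 \<noteq> s2\<^sup>2\<close> assms(5,6)]
      \<open>0 < s1\<close> \<open>0 < s2\<close>
    by simp
  with \<open>s1\<^sup>2 \<noteq> s2\<^sup>2\<close> \<open>0 < s1\<close> show ?thesis by (simp add: field_simps)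
qed (use \<open>0 < s2\<close> in simp)

lemma lam_of_dhat_common_support:
  fixes A :: "real^'k^'k"
  assumes "invertible A" and dhat: "\<And>s. 0 < s \<Longrightarrow> is_dhat A u v s (d s)" and "0 < s1" "0 < s2"
    and "S = {g. lam_of (d s1 $ g) < \<infinity>}" "S = {g. lam_of (d s2 $ g) < \<infinity>}" and "g \<in> S"
  shows "lam_of (d s1 $ g) =
    ereal (inverse (s2\<^sup>2 / s1\<^sup>2 * inverse (real_of_ereal (lam_of (d s2 $ g)))
      + (s2\<^sup>2 / s1\<^sup>2 - 1) * ls_coef A S v $ g))"
proof -
  have S1: "S = {g. d s1 $ g \<noteq> 0}" and S2: "S = {g. d s2 $ g \<noteq> 0}"
    using assms(5,6) by (simp_all only: lam_of_less_infinity_iff)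
  with \<open>g \<in> S\<close> have "d s1 $ g \<noteq> 0" "d s2 $ g \<noteq> 0" by auto
  then show ?thesis
    using dhat_common_support_eq[OF assms(1) dhat \<open>0 < s1\<close> \<open>0 < s2\<close> S1 S2, of g]
    by (simp add: lam_of_nonzero)
qed

lemma Amat_nonneg: "0 \<le> Amat X li G $ g $ h"
  unfolding Amat_def by (simp add: sum_nonneg)

lemma Mmat_eq_Nmat_mult:
  "Mmat X li = (1 / sqrt (real CARD('n))) *\<^sub>R (Nmat X li ** (X :: real^'p^'n))"
proof -
  have "(1 / sqrt (real CARD('n))) * (1 / sqrt (real CARD('n))) = 1 / real CARD('n)"
    by (simp add: real_sqrt_mult[symmetric])
  then show ?thesis
    unfolding Mmat_def Nmat_def
    by (simp add: matrix_mul_assoc scalar_matrix_assoc matrix_scalar_ac)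
qed

lemma vvec_pos:
  assumes "invertible (Amat X li G)"
  shows "0 < vvec X li G $ g"
proof -
  have "vvec X li G $ g \<noteq> 0"
  proof
    assume "vvec X li G $ g = 0"
    then have "Nmat X li $ i $ j = 0" if "i \<in> G g" for i j
      using that by (simp add: vvec_def sum_nonneg_eq_0_iff sum_nonneg)
    then have "Mmat X li $ i $ j = 0" if "i \<in> G g" for i j
      using that by (simp add: Mmat_eq_Nmat_mult matrix_matrix_mult_def)
    then have "row g (Amat X li G) = 0"
      by (simp add: row_def Amat_def vec_eq_iff)
    then have "det (Amat X li G) = 0" by (rule det_zero_row)
    then show False using assms by (simp add: invertible_det_nz)
  qed
  then show ?thesis by (simp add: vvec_def sum_nonneg order_le_neq_trans)
qed

lemma dhat_eq_0_above_threshold: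
  assumes "invertible (Amat X li G)" and "0 < s"
    and "Max (range (\<lambda>g. uhat X Y li G $ g / vvec X li G $ g)) \<le> s\<^sup>2"
    and "is_dhat (Amat X li G) (uhat X Y li G) (vvec X li G) s d"
  shows "d = 0"
proof (rule is_dhat_eq_0[OF Amat_nonneg assms(1) _ assms(4)])
  fix g
  have "uhat X Y li G $ g / vvec X li G $ g \<le> s\<^sup>2"
    using order_trans[OF Max_ge[OF _ rangeI] assms(3)] by simp
  then show "uhat X Y li G $ g / s\<^sup>2 \<le> vvec X li G $ g"
    using vvec_pos[OF assms(1), of g] \<open>0 < s\<close> by (simp add: field_simps)
qed

lemma is_group_ridge_all_infinite_iff:
  assumes "(\<Union>g. G g) = UNIV" and "\<And>g. lam g = \<infinity>"
  shows "is_group_ridge X Y G lam w \<longleftrightarrow> w = 0"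
proof -
  have "ridge_feasible G lam w' \<longleftrightarrow> w' = 0" for w'
    using assms by (auto simp: ridge_feasible_def vec_eq_iff)
  then show ?thesis by (auto simp: is_group_ridge_def)
qed

theorem proposition1:
  fixes X :: "real^'p::finite^'n::finite" and Y :: "real^'n"
    and G :: "'k::finite \<Rightarrow> 'p set" and li :: real
    and dhat :: "real \<Rightarrow> real^'k"
  assumes part_disj: "\<And>g h. g \<noteq> h \<Longrightarrow> G g \<inter> G h = {}"
    and part_cover: "(\<Union>g. G g) = UNIV"
    and part_ne: "\<And>g. G g \<noteq> {}"
    and li_pos: "li > 0"
    and A_inv: "invertible (Amat X li G)"
    and u_pos: "\<And>g. uhat X Y li G $ g > 0"
    and dhat_def: "\<And>s. s > 0 \<Longrightarrow> is_dhat (Amat X li G) (uhat X Y li G) (vvec X li G) s (dhat s)"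
  shows
    "(\<forall>s>0. s\<^sup>2 \<ge> Max (range (\<lambda>g. uhat X Y li G $ g / vvec X li G $ g)) \<longrightarrow>
        (\<forall>g. lam_of (dhat s $ g) = \<infinity>) \<and>
        (\<forall>w. is_group_ridge X Y G (\<lambda>g. lam_of (dhat s $ g)) w \<longleftrightarrow> w = 0))
   \<and> ((\<lambda>s. Min (range (\<lambda>g. lam_of (dhat s $ g)))) \<longlongrightarrow> (0::ereal)) (at_right 0)
   \<and> (\<forall>s1 s2. s1 > 0 \<longrightarrow> s2 > 0 \<longrightarrow>
        {g. lam_of (dhat s1 $ g) < \<infinity>} = {g. lam_of (dhat s2 $ g) < \<infinity>} \<longrightarrow>
        (\<forall>g\<in>{g. lam_of (dhat s1 $ g) < \<infinity>}.
           lam_of (dhat s1 $ g) =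
             ereal (inverse (s2\<^sup>2 / s1\<^sup>2 * inverse (real_of_ereal (lam_of (dhat s2 $ g)))
               + (s2\<^sup>2 / s1\<^sup>2 - 1) *
                 ls_coef (Amat X li G) {g. lam_of (dhat s1 $ g) < \<infinity>} (vvec X li G) $ g))))"
proof (intro conjI allI impI ballI)
  fix s assume s: "0 < s"
    and threshold: "Max (range (\<lambda>g. uhat X Y li G $ g / vvec X li G $ g)) \<le> s\<^sup>2"
  have "dhat s = 0" by (rule dhat_eq_0_above_threshold[OF A_inv s threshold dhat_def[OF s]])
  then have lam: "lam_of (dhat s $ g) = \<infinity>" for g by (simp add: lam_of_def)
  then show "lam_of (dhat s $ g) = \<infinity>" for g .
  show "is_group_ridge X Y G (\<lambda>g. lam_of (dhat s $ g)) w \<longleftrightarrow> w = 0" for w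
    by (rule is_group_ridge_all_infinite_iff[OF part_cover lam])
next
  show "((\<lambda>s. Min (range (\<lambda>g. lam_of (dhat s $ g)))) \<longlongrightarrow> 0) (at_right 0)"
    by (rule Min_lam_of_dhat_tendsto_0[OF Amat_nonneg A_inv u_pos dhat_def])
qed (rule lam_of_dhat_common_support[OF A_inv dhat_def]; simp)

end
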